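(* Let $G$ be a locally finite quasi-transitive graph with infinitely many ends, and let $(T,\mathcal{X})$ be a canonical tree-decomposition of $G$ such that: every bag is a finite clique; for every adhesion set $X$ there is a unique edge $tt'\in E(T)$ with $X=X_t\cap X_{t'}$; and there is an end of $G$ which is stabilized by all automorphisms of $G$. Then $G$ does not have a periodic proper vertex-coloring.
   Context: A tree-decomposition of $G$ is a pair $(T,\mathcal{X})$ with $T$ a tree and $\mathcal{X}=(X_t)_{t\in V(T)}$ subsets (bags) of $V(G)$ covering $V(G)$, such that every edge has both endpoints in some bag and for each vertex $v$ the set $\{t: v\in X_t\}$ induces a connected subtree. Its adhesion sets are the sets $X_t\cap X_{t'}$ for $tt'\in E(T)$. It is canonical if $\mathrm{Aut}(G)$ acts by automorphisms on $T$ with $g(X_t)=X_{g\cdot t}$. Locally finite: all degrees finite; quasi-transitive: finitely many $\mathrm{Aut}(G)$-orbits on $V(G)$. Ends: equivalence classes of rays, two rays equivalent if joined by infinitely many disjoint paths. A vertex-coloring is periodic if the subgroup of color-preserving automorphisms has finitely many orbits on $V(G)$. *)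

theory Defs
  imports Main
begin

text \<open>A (simple, possibly infinite) graph on the vertex type 'v is given by a
 symmetric irreflexive adjacency relation E; its vertex set is the whole type.\<close>

definition graph :: "('v \<Rightarrow> 'v \<Rightarrow> bool) \<Rightarrow> bool" where
  "graph E \<longleftrightarrow> (\<forall>x y. E x y \<longrightarrow> E y x) \<and> (\<forall>x. \<not> E x x)"

definition gpath :: "('v \<Rightarrow> 'v \<Rightarrow> bool) \<Rightarrow> 'v list \<Rightarrow> bool" where
  "gpath E ps \<longleftrightarrow> ps \<noteq> [] \<and> distinct ps \<and>
     (\<forall>i. Suc i < length ps \<longrightarrow> E (ps ! i) (ps ! Suc i))"

definition connected_graph :: "('v \<Rightarrow> 'v \<Rightarrow> bool) \<Rightarrow> bool" where
  "connected_graph E \<longleftrightarrow> (\<forall>u v. \<exists>ps. gpath E ps \<and> hd ps = u \<and> last ps = v)"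

definition induces_connected :: "('v \<Rightarrow> 'v \<Rightarrow> bool) \<Rightarrow> 'v set \<Rightarrow> bool" where
  "induces_connected E S \<longleftrightarrow>
     (\<forall>u\<in>S. \<forall>v\<in>S. \<exists>ps. gpath E ps \<and> hd ps = u \<and> last ps = v \<and> set ps \<subseteq> S)"

definition has_cycle :: "('v \<Rightarrow> 'v \<Rightarrow> bool) \<Rightarrow> bool" where
  "has_cycle E \<longleftrightarrow> (\<exists>cs. gpath E cs \<and> length cs \<ge> 3 \<and> E (last cs) (hd cs))"

definition is_tree :: "('t \<Rightarrow> 't \<Rightarrow> bool) \<Rightarrow> bool" where
  "is_tree T \<longleftrightarrow> graph T \<and> connected_graph T \<and> \<not> has_cycle T"

definition locally_finite :: "('v \<Rightarrow> 'v \<Rightarrow> bool) \<Rightarrow> bool" where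
  "locally_finite E \<longleftrightarrow> (\<forall>v. finite {u. E v u})"

definition Aut :: "('v \<Rightarrow> 'v \<Rightarrow> bool) \<Rightarrow> ('v \<Rightarrow> 'v) set" where
  "Aut E = {g. bij g \<and> (\<forall>x y. E x y \<longleftrightarrow> E (g x) (g y))}"

definition orbits :: "('v \<Rightarrow> 'v) set \<Rightarrow> 'v set set" where
  "orbits H = {(\<lambda>g. g v) ` H | v. True}"

definition quasi_transitive :: "('v \<Rightarrow> 'v \<Rightarrow> bool) \<Rightarrow> bool" where
  "quasi_transitive E \<longleftrightarrow> finite (orbits (Aut E))"

definition is_ray :: "('v \<Rightarrow> 'v \<Rightarrow> bool) \<Rightarrow> (nat \<Rightarrow> 'v) \<Rightarrow> bool" where
  "is_ray E R \<longleftrightarrow> inj R \<and> (\<forall>n. E (R n) (R (Suc n)))"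

definition ray_equiv :: "('v \<Rightarrow> 'v \<Rightarrow> bool) \<Rightarrow> (nat \<Rightarrow> 'v) \<Rightarrow> (nat \<Rightarrow> 'v) \<Rightarrow> bool" where
  "ray_equiv E R1 R2 \<longleftrightarrow>
     (\<exists>P. infinite P \<and>
        (\<forall>p\<in>P. gpath E p \<and> hd p \<in> range R1 \<and> last p \<in> range R2) \<and>
        (\<forall>p\<in>P. \<forall>q\<in>P. p \<noteq> q \<longrightarrow> set p \<inter> set q = {}))"

definition ends :: "('v \<Rightarrow> 'v \<Rightarrow> bool) \<Rightarrow> (nat \<Rightarrow> 'v) set set" where
  "ends E = {{R'. is_ray E R' \<and> ray_equiv E R R'} | R. is_ray E R}"

definition stabilizes_end :: "('v \<Rightarrow> 'v) \<Rightarrow> (nat \<Rightarrow> 'v) set \<Rightarrow> bool" where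
  "stabilizes_end g \<omega> \<longleftrightarrow> (\<forall>R\<in>\<omega>. g \<circ> R \<in> \<omega>)"

definition tree_decomposition ::
  "('v \<Rightarrow> 'v \<Rightarrow> bool) \<Rightarrow> ('t \<Rightarrow> 't \<Rightarrow> bool) \<Rightarrow> ('t \<Rightarrow> 'v set) \<Rightarrow> bool" where
  "tree_decomposition E T X \<longleftrightarrow> is_tree T \<and>
     (\<Union>t. X t) = UNIV \<and>
     (\<forall>u v. E u v \<longrightarrow> (\<exists>t. u \<in> X t \<and> v \<in> X t)) \<and>
     (\<forall>v. induces_connected T {t. v \<in> X t})"

text \<open>Canonical: Aut(G) acts on T by tree automorphisms, compatibly with the bags.\<close>
definition canonical_td ::
  "('v \<Rightarrow> 'v \<Rightarrow> bool) \<Rightarrow> ('t \<Rightarrow> 't \<Rightarrow> bool) \<Rightarrow> ('t \<Rightarrow> 'v set) \<Rightarrow> bool" where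
  "canonical_td E T X \<longleftrightarrow>
     (\<exists>\<sigma> :: ('v \<Rightarrow> 'v) \<Rightarrow> 't \<Rightarrow> 't.
        \<sigma> id = id \<and>
        (\<forall>g\<in>Aut E. \<forall>h\<in>Aut E. \<sigma> (g \<circ> h) = \<sigma> g \<circ> \<sigma> h) \<and>
        (\<forall>g\<in>Aut E. \<sigma> g \<in> Aut T \<and> (\<forall>t. g ` X t = X (\<sigma> g t))))"

definition is_clique :: "('v \<Rightarrow> 'v \<Rightarrow> bool) \<Rightarrow> 'v set \<Rightarrow> bool" where
  "is_clique E S \<longleftrightarrow> (\<forall>u\<in>S. \<forall>v\<in>S. u \<noteq> v \<longrightarrow> E u v)"

definition unique_adhesion :: "('t \<Rightarrow> 't \<Rightarrow> bool) \<Rightarrow> ('t \<Rightarrow> 'v set) \<Rightarrow> bool" where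
  "unique_adhesion T X \<longleftrightarrow>
     (\<forall>t1 t2 s1 s2. T t1 t2 \<and> T s1 s2 \<and> X t1 \<inter> X t2 = X s1 \<inter> X s2
        \<longrightarrow> {t1, t2} = {s1, s2})"

definition proper_coloring :: "('v \<Rightarrow> 'v \<Rightarrow> bool) \<Rightarrow> ('v \<Rightarrow> 'c) \<Rightarrow> bool" where
  "proper_coloring E c \<longleftrightarrow> (\<forall>u v. E u v \<longrightarrow> c u \<noteq> c v)"

definition periodic_coloring :: "('v \<Rightarrow> 'v \<Rightarrow> bool) \<Rightarrow> ('v \<Rightarrow> 'c) \<Rightarrow> bool" where
  "periodic_coloring E c \<longleftrightarrow> finite (orbits {g \<in> Aut E. \<forall>v. c (g v) = c v})"

end

theory Submission
  imports Defs "HOL-Library.Transitive_Closure_Table"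
begin

text \<open>Fix a ray R in the end that every automorphism stabilises. Since bags are finite, R
  eventually stays in a single component of T - t for every node t; this orients each edge of T
  towards the end, giving a parent function par. Two rays are equivalent iff they eventually lie
  below the same nodes, and distinct such sets of nodes already differ at a common depth under a
  common ancestor a. Hence if every level {t. par^n t = a} has boundedly many nodes with nonempty
  bag, G has only finitely many ends.

  Such a bound follows from a proper colouring c with finitely many orbits of colour-preserving
  automorphisms. These automorphisms commute with par, as they fix the end of R, and since c is
  proper on the clique bags and adhesion sets determine their edges, the action on T of a
  colour-preserving automorphism is determined by the image of a single node. Moving each node of
  a level into one of the finitely many nodes whose bags contain a chosen orbit representative is
  therefore injective.\<close>

lemma gpath_ConsD:
  assumes "gpath E (a # b # ps)"
  shows "E a b" "gpath E (b # ps)"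
proof -
  show "E a b" using assms unfolding gpath_def by force
  show "gpath E (b # ps)" unfolding gpath_def
  proof (intro conjI allI impI)
    fix i assume "Suc i < length (b # ps)"
    then have "Suc (Suc i) < length (a # b # ps)" by simp
    then have "E ((a # b # ps) ! Suc i) ((a # b # ps) ! Suc (Suc i))"
      using assms unfolding gpath_def by blast
    then show "E ((b # ps) ! i) ((b # ps) ! Suc i)" by simp
  qed (use assms in \<open>auto simp: gpath_def\<close>)
qed

lemma gpath_rtranclp_within:
  assumes "gpath E ps" "set ps \<subseteq> S"
  shows "(\<lambda>x y. E x y \<and> x \<in> S \<and> y \<in> S)\<^sup>*\<^sup>* (hd ps) (last ps)"
  using assms
proof (induction ps rule: induct_list012)
  case 1
  then show ?case by (simp add: gpath_def)
next
  case (2 a)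
  then show ?case by simp
next
  case (3 a b ps)
  have "(\<lambda>x y. E x y \<and> x \<in> S \<and> y \<in> S)\<^sup>*\<^sup>* b (last (b # ps))"
    using "3.IH"(2) gpath_ConsD(2)[OF "3.prems"(1)] "3.prems"(2) by simp
  moreover have "E a b" "a \<in> S" "b \<in> S"
    using gpath_ConsD(1)[OF "3.prems"(1)] "3.prems"(2) by auto
  ultimately show ?case by (simp add: converse_rtranclp_into_rtranclp)
qed

lemma connected_graph_rtranclp:
  assumes "connected_graph E"
  shows "E\<^sup>*\<^sup>* u v"
proof -
  obtain ps where "gpath E ps" "hd ps = u" "last ps = v"
    using assms unfolding connected_graph_def by blast
  with gpath_rtranclp_within[of E ps UNIV] show ?thesis by simp
qed

lemma induces_connected_rtranclp:
  assumes "induces_connected E S" "u \<in> S" "v \<in> S"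
  shows "(\<lambda>x y. E x y \<and> x \<in> S \<and> y \<in> S)\<^sup>*\<^sup>* u v"
proof -
  obtain ps where "gpath E ps" "hd ps = u" "last ps = v" "set ps \<subseteq> S"
    using assms unfolding induces_connected_def by blast
  with gpath_rtranclp_within[of E ps S] show ?thesis by simp
qed

lemma gpath_of_rtrancl_path:
  assumes "rtrancl_path r x xs y" "distinct (x # xs)" "\<And>a b. r a b \<Longrightarrow> E a b"
  shows "gpath E (x # xs)" "last (x # xs) = y"
proof -
  show "gpath E (x # xs)" unfolding gpath_def
  proof (intro conjI allI impI)
    fix i assume "Suc i < length (x # xs)"
    then have "i < length xs" by simp
    from rtrancl_path_nth[OF assms(1) this] assms(3)
    show "E ((x # xs) ! i) ((x # xs) ! Suc i)" by simp
  qed (use assms in auto)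
  show "last (x # xs) = y"
  proof (cases xs)
    case Nil
    then show ?thesis using assms(1) by (auto elim: rtrancl_path.cases)
  next
    case (Cons a list)
    then show ?thesis using rtrancl_path_last[OF assms(1)] by simp
  qed
qed

section \<open>Separating rays by finite vertex sets\<close>

definition locally_constant_off :: "('v \<Rightarrow> 'v \<Rightarrow> bool) \<Rightarrow> 'v set \<Rightarrow> ('v \<Rightarrow> 'a) \<Rightarrow> bool" where
  "locally_constant_off E A \<kappa> \<longleftrightarrow> (\<forall>u v. E u v \<longrightarrow> u \<notin> A \<longrightarrow> v \<notin> A \<longrightarrow> \<kappa> u = \<kappa> v)"

lemma locally_constant_off_gpath:
  assumes "locally_constant_off E A \<kappa>" "gpath E p" "set p \<inter> A = {}"
  shows "\<kappa> (hd p) = \<kappa> (last p)"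
proof -
  have "set p \<subseteq> - A" using assms(3) by blast
  from gpath_rtranclp_within[OF assms(2) this]
  show ?thesis
  proof (induction rule: rtranclp_induct)
    case (step y z)
    then have "\<kappa> y = \<kappa> z" using assms(1) unfolding locally_constant_off_def by blast
    with step.IH show ?case by simp
  qed simp
qed

lemma locally_constant_off_walk:
  assumes "locally_constant_off E A \<kappa>" "\<And>n. E (Q n) (Q (Suc n))" "\<And>n. N \<le> n \<Longrightarrow> Q n \<notin> A"
    and "N \<le> n"
  shows "\<kappa> (Q n) = \<kappa> (Q N)"
  using \<open>N \<le> n\<close>
proof (induction n rule: dec_induct)
  case (step n)
  then have "Q n \<notin> A" "Q (Suc n) \<notin> A" using assms(3) by simp_all
  then have "\<kappa> (Q n) = \<kappa> (Q (Suc n))"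
    using assms(1,2) unfolding locally_constant_off_def by blast
  with step.IH show ?case by simp
qed simp

lemma ray_meets_if_label_changes:
  assumes "locally_constant_off E A \<kappa>" "is_ray E Q" "\<kappa> (Q 0) \<noteq> \<kappa> (Q m)"
  shows "\<exists>j. Q j \<in> A"
proof (rule ccontr)
  assume "\<nexists>j. Q j \<in> A"
  then have "\<kappa> (Q m) = \<kappa> (Q 0)"
    using locally_constant_off_walk[OF assms(1), of Q 0 m] assms(2) unfolding is_ray_def by blast
  with assms(3) show False by simp
qed

lemma inj_eventually_not_in:
  assumes "inj Q" "finite A"
  shows "\<forall>\<^sub>F n in sequentially. Q n \<notin> A"
proof -
  have "finite {n. Q n \<in> A}" using finite_vimageI[OF assms(2,1)] by (simp add: vimage_def)
  then have "\<forall>\<^sub>F n in cofinite. Q n \<notin> A" by (simp add: eventually_cofinite)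
  then show ?thesis by (simp add: cofinite_eq_sequentially)
qed

lemma ray_eventually_constant_off:
  assumes "is_ray E Q" "finite A" "locally_constant_off E A \<kappa>"
  obtains N where "\<And>n. N \<le> n \<Longrightarrow> Q n \<notin> A" "\<And>n. N \<le> n \<Longrightarrow> \<kappa> (Q n) = \<kappa> (Q N)"
proof -
  have "inj Q" and step: "\<And>n. E (Q n) (Q (Suc n))" using assms(1) unfolding is_ray_def by auto
  obtain N where N: "\<And>n. N \<le> n \<Longrightarrow> Q n \<notin> A"
    using inj_eventually_not_in[OF \<open>inj Q\<close> assms(2)] unfolding eventually_sequentially by blast
  moreover have "\<kappa> (Q n) = \<kappa> (Q N)" if "N \<le> n" for n
    using locally_constant_off_walk[of E A \<kappa> Q N n, OF assms(3) step N that] .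
  ultimately show thesis by (rule that)
qed

lemma finite_meeting_disjoint_family:
  assumes "\<forall>p\<in>P. \<forall>q\<in>P. p \<noteq> q \<longrightarrow> set p \<inter> set q = {}" "finite Y"
  shows "finite {p\<in>P. set p \<inter> Y \<noteq> {}}"
proof -
  have "finite {p\<in>P. y \<in> set p}" for y
  proof (cases "\<exists>p\<in>P. y \<in> set p")
    case True
    then obtain p0 where "p0 \<in> P" "y \<in> set p0" by blast
    with assms(1) have "{p\<in>P. y \<in> set p} \<subseteq> {p0}" by blast
    then show ?thesis by (rule finite_subset) simp
  next
    case False
    then have "{p\<in>P. y \<in> set p} = {}" by blast
    then show ?thesis by (metis finite.emptyI)
  qed
  moreover have "{p\<in>P. set p \<inter> Y \<noteq> {}} = (\<Union>y\<in>Y. {p\<in>P. y \<in> set p})" by blast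
  ultimately show ?thesis using assms(2) by simp
qed

lemma not_ray_equiv_if_labels_differ:
  assumes "finite A" "locally_constant_off E A \<kappa>"
    and "\<forall>\<^sub>F n in sequentially. \<kappa> (Q1 n) = k1" "\<forall>\<^sub>F n in sequentially. \<kappa> (Q2 n) = k2"
    and "k1 \<noteq> k2"
  shows "\<not> ray_equiv E Q1 Q2"
proof
  assume "ray_equiv E Q1 Q2"
  then obtain P where P: "infinite P" "\<forall>p\<in>P. gpath E p \<and> hd p \<in> range Q1 \<and> last p \<in> range Q2"
    "\<forall>p\<in>P. \<forall>q\<in>P. p \<noteq> q \<longrightarrow> set p \<inter> set q = {}"
    unfolding ray_equiv_def by blast
  obtain N1 N2 where N1: "\<And>n. N1 \<le> n \<Longrightarrow> \<kappa> (Q1 n) = k1" and N2: "\<And>n. N2 \<le> n \<Longrightarrow> \<kappa> (Q2 n) = k2"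
    using assms(3,4) unfolding eventually_sequentially by blast
  define Y where "Y = A \<union> Q1 ` {..<N1} \<union> Q2 ` {..<N2}"
  have "finite Y" unfolding Y_def using assms(1) by simp
  with P(1) finite_meeting_disjoint_family[OF P(3)]
  have "infinite (P - {p\<in>P. set p \<inter> Y \<noteq> {}})" by (simp add: Diff_infinite_finite)
  then obtain p where p: "p \<in> P" "set p \<inter> Y = {}" using infinite_imp_nonempty by blast
  then have path: "gpath E p" "hd p \<in> range Q1" "last p \<in> range Q2" using P(2) by auto
  then have ends_in: "hd p \<in> set p" "last p \<in> set p" unfolding gpath_def by auto
  obtain m1 m2 where m: "hd p = Q1 m1" "last p = Q2 m2" using path(2,3) by blast
  have "N1 \<le> m1" "N2 \<le> m2" using p(2) ends_in m unfolding Y_def by (auto simp: not_le)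
  moreover have "set p \<inter> A = {}" using p(2) unfolding Y_def by blast
  ultimately have "k1 = k2"
    using locally_constant_off_gpath[OF assms(2) path(1)] m N1 N2 by simp
  with assms(5) show False ..
qed

lemma ray_equivI:
  assumes "\<And>F. finite F \<Longrightarrow> \<exists>p. gpath E p \<and> hd p \<in> range Q1 \<and> last p \<in> range Q2 \<and> set p \<inter> F = {}"
  shows "ray_equiv E Q1 Q2"
proof -
  define good where
    "good F p \<longleftrightarrow> gpath E p \<and> hd p \<in> range Q1 \<and> last p \<in> range Q2 \<and> set p \<inter> F = {}" for F p
  define next_path where "next_path ps = (SOME p. good (\<Union> (set ` set ps)) p)" for ps
  define paths where "paths = rec_nat [] (\<lambda>_ ps. next_path ps # ps)"
  define p where "p n = next_path (paths n)" for n
  have paths_Suc: "paths (Suc n) = p n # paths n" for n unfolding paths_def p_def by simp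
  have good: "good (\<Union> (set ` set (paths n))) (p n)" for n
    unfolding p_def next_path_def by (rule someI_ex) (simp add: assms good_def)
  have earlier: "m < n \<Longrightarrow> p m \<in> set (paths n)" for m n
    by (induction n) (auto simp: paths_Suc less_Suc_eq)
  have disjoint: "set (p m) \<inter> set (p n) = {}" if "m < n" for m n
    using earlier[OF that] good[of n] unfolding good_def by blast
  have nonempty: "set (p n) \<noteq> {}" for n
    using good[of n] unfolding good_def gpath_def by simp
  have "inj p"
  proof (rule injI)
    fix m n assume "p m = p n"
    with disjoint[of m n] disjoint[of n m] nonempty[of n] show "m = n"
      by (metis Int_absorb linorder_neqE_nat)
  qed
  then have "infinite (range p)" using finite_imageD by blast
  moreover have "\<forall>q\<in>range p. gpath E q \<and> hd q \<in> range Q1 \<and> last q \<in> range Q2"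
    using good unfolding good_def by blast
  moreover have "\<forall>q\<in>range p. \<forall>q'\<in>range p. q \<noteq> q' \<longrightarrow> set q \<inter> set q' = {}"
    using disjoint by (metis Int_commute linorder_neqE_nat rangeE)
  ultimately show ?thesis unfolding ray_equiv_def by blast
qed

lemma ray_equiv_refl:
  assumes "is_ray E Q"
  shows "ray_equiv E Q Q"
proof (rule ray_equivI)
  fix F :: "'a set" assume "finite F"
  then obtain N where "Q N \<notin> F"
    using eventually_happens'[OF sequentially_bot inj_eventually_not_in] assms
    unfolding is_ray_def by blast
  then have "gpath E [Q N] \<and> hd [Q N] \<in> range Q \<and> last [Q N] \<in> range Q \<and> set [Q N] \<inter> F = {}"
    unfolding gpath_def by simp
  then show "\<exists>p. gpath E p \<and> hd p \<in> range Q \<and> last p \<in> range Q \<and> set p \<inter> F = {}" by blast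
qed

lemma is_ray_comp_Aut:
  assumes "g \<in> Aut E" "is_ray E Q"
  shows "is_ray E (g \<circ> Q)"
  using assms unfolding is_ray_def Aut_def bij_def by (auto intro: inj_compose)

section \<open>Sides of an edge of a tree\<close>

locale tree =
  fixes T :: "'t \<Rightarrow> 't \<Rightarrow> bool"
  assumes tree: "is_tree T"
begin

lemma T_sym: "T x y \<Longrightarrow> T y x" and T_irrefl: "\<not> T x x"
  using tree unfolding is_tree_def graph_def by blast+

lemma T_rtranclp: "T\<^sup>*\<^sup>* x y"
  using tree unfolding is_tree_def by (simp add: connected_graph_rtranclp)

definition T_del :: "'t \<Rightarrow> 't \<Rightarrow> 't \<Rightarrow> 't \<Rightarrow> bool" where
  "T_del a b x y \<longleftrightarrow> T x y \<and> {x, y} \<noteq> {a, b}"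

definition side :: "'t \<Rightarrow> 't \<Rightarrow> 't set" where
  "side a b = {x. (T_del a b)\<^sup>*\<^sup>* a x}"

lemma side_self: "a \<in> side a b"
  unfolding side_def by simp

lemma side_closed:
  assumes "x \<in> side a b" "T x y" "{x, y} \<noteq> {a, b}"
  shows "y \<in> side a b"
  using assms unfolding side_def T_del_def by (simp add: rtranclp.rtrancl_into_rtrancl)

lemma T_del_rtranclp_sym:
  assumes "(T_del a b)\<^sup>*\<^sup>* x y"
  shows "(T_del a b)\<^sup>*\<^sup>* y x"
proof -
  have "symp (T_del a b)"
    unfolding T_del_def by (rule sympI) (auto simp: insert_commute dest: T_sym)
  with assms show ?thesis by (metis symp_rtranclp sympD)
qed

lemma other_end_not_in_side:
  assumes "T a b"
  shows "b \<notin> side a b"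
proof
  assume "b \<in> side a b"
  then have "(T_del a b)\<^sup>*\<^sup>* a b" unfolding side_def by simp
  then obtain xs where "rtrancl_path (T_del a b) a xs b"
    by (metis rtranclp_eq_rtrancl_path)
  then obtain ys where ys: "rtrancl_path (T_del a b) a ys b" "distinct (a # ys)"
    using rtrancl_path_distinct by metis
  have path: "gpath T (a # ys)" "last (a # ys) = b"
    using gpath_of_rtrancl_path[OF ys] unfolding T_del_def by blast+
  have "ys \<noteq> []"
    using ys(1) T_irrefl assms by (auto elim: rtrancl_path.cases)
  moreover have "ys \<noteq> [b]"
  proof
    assume "ys = [b]"
    with ys(1) have "T_del a b a b" by (auto elim!: rtrancl_path.cases)
    then show False unfolding T_del_def by simp
  qed
  ultimately have "length (a # ys) \<ge> 3"
    using path(2) by (cases ys rule: remdups_adj.cases) auto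
  with path assms T_sym have "has_cycle T" unfolding has_cycle_def by fastforce
  with tree show False unfolding is_tree_def by blast
qed

lemma sides_disjoint:
  assumes "T a b"
  shows "side a b \<inter> side b a = {}"
proof (rule ccontr)
  assume "side a b \<inter> side b a \<noteq> {}"
  then obtain x where "(T_del a b)\<^sup>*\<^sup>* a x" "(T_del b a)\<^sup>*\<^sup>* b x"
    unfolding side_def by blast
  moreover have "T_del b a = T_del a b"
    unfolding T_del_def by (intro ext) (auto simp: insert_commute)
  ultimately have "(T_del a b)\<^sup>*\<^sup>* a b"
    by (metis T_del_rtranclp_sym rtranclp_trans)
  with other_end_not_in_side[OF assms] show False unfolding side_def by blast
qed

lemma side_subset_side:
  assumes "T t s1" "T t s2" "s1 \<noteq> s2"
  shows "side s1 t \<subseteq> side t s2"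
proof
  fix x assume "x \<in> side s1 t"
  then have "(T_del s1 t)\<^sup>*\<^sup>* s1 x" unfolding side_def by simp
  then show "x \<in> side t s2"
  proof (induction rule: rtranclp_induct)
    case base
    have "{t, s1} \<noteq> {t, s2}" using assms(3) by (simp add: doubleton_eq_iff)
    then show ?case by (rule side_closed[OF side_self assms(1)])
  next
    case (step y z)
    then have "y \<in> side s1 t" "z \<in> side s1 t" unfolding side_def by auto
    then have "y \<noteq> t" "z \<noteq> t" using other_end_not_in_side[OF T_sym[OF assms(1)]] by auto
    then have "{y, z} \<noteq> {t, s2}" by (simp add: doubleton_eq_iff)
    with step.IH step.hyps(2) show ?case unfolding T_del_def by (blast intro: side_closed)
  qed
qed

lemma sides_at_node_disjoint:
  assumes "T t s1" "T t s2" "s1 \<noteq> s2"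
  shows "side s1 t \<inter> side s2 t = {}"
  using side_subset_side[OF assms] sides_disjoint[OF assms(2)] by blast

lemma in_some_side:
  assumes "x \<noteq> t"
  obtains s where "T t s" "x \<in> side s t"
proof -
  have "T\<^sup>*\<^sup>* x t" by (rule T_rtranclp)
  then have "\<exists>s. T t s \<and> x \<in> side s t" using assms
  proof (induction rule: converse_rtranclp_induct)
    case (step x y)
    show ?case
    proof (cases "y = t")
      case True
      then show ?thesis using step.hyps(1) T_sym side_self by blast
    next
      case False
      then obtain s where s: "T t s" "y \<in> side s t" using step.IH by blast
      have "{y, x} \<noteq> {s, t}" using False step.prems by (auto simp: doubleton_eq_iff)
      with s step.hyps(1) T_sym show ?thesis by (blast intro: side_closed)
    qed
  qed simp
  with that show thesis by blast
qed

lemma side_image: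
  assumes "\<tau> \<in> Aut T" "x \<in> side a b"
  shows "\<tau> x \<in> side (\<tau> a) (\<tau> b)"
proof -
  have T\<tau>: "T x y \<longleftrightarrow> T (\<tau> x) (\<tau> y)" and "inj \<tau>" for x y
    using assms(1) unfolding Aut_def bij_def by blast+
  have "(T_del a b)\<^sup>*\<^sup>* a x" using assms(2) unfolding side_def by simp
  then show ?thesis
  proof (induction rule: rtranclp_induct)
    case (step y z)
    then have "{y, z} \<noteq> {a, b}" "T y z" unfolding T_del_def by auto
    then have "T (\<tau> y) (\<tau> z)" "{\<tau> y, \<tau> z} \<noteq> {\<tau> a, \<tau> b}"
      using inj_image_eq_iff[OF \<open>inj \<tau>\<close>, of "{y, z}" "{a, b}"] T\<tau> by auto
    with step.IH show ?case by (rule side_closed)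
  qed (simp add: side_self)
qed

end

locale clique_td =
  fixes E :: "'v \<Rightarrow> 'v \<Rightarrow> bool" and T :: "'t \<Rightarrow> 't \<Rightarrow> bool" and X :: "'t \<Rightarrow> 'v set"
  assumes locally_finite: "locally_finite E"
    and decomposition: "tree_decomposition E T X"
    and finite_clique_bags: "\<forall>t. finite (X t) \<and> is_clique E (X t)"
    and unique_adhesion: "unique_adhesion T X"
begin

sublocale tree T
  using decomposition unfolding tree_decomposition_def by unfold_locales blast

lemma finite_bag: "finite (X t)"
  using finite_clique_bags by blast

lemma bag_clique: "u \<in> X t \<Longrightarrow> w \<in> X t \<Longrightarrow> u \<noteq> w \<Longrightarrow> E u w"
  using finite_clique_bags unfolding is_clique_def by blast

lemma edge_in_bag:
  assumes "E u w"
  obtains t where "u \<in> X t" "w \<in> X t"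
  using assms decomposition unfolding tree_decomposition_def by blast

lemma same_adhesion_same_edge:
  "T t1 t2 \<Longrightarrow> T s1 s2 \<Longrightarrow> X t1 \<inter> X t2 = X s1 \<inter> X s2 \<Longrightarrow> {t1, t2} = {s1, s2}"
  using unique_adhesion unfolding unique_adhesion_def by blast

definition nodes_with :: "'v \<Rightarrow> 't set" where
  "nodes_with v = {t. v \<in> X t}"

lemma nodes_with_nonempty: "nodes_with v \<noteq> {}"
  using decomposition unfolding tree_decomposition_def nodes_with_def by blast

lemma nodes_with_rtranclp:
  assumes "x \<in> nodes_with v" "y \<in> nodes_with v"
  shows "(\<lambda>a b. T a b \<and> a \<in> nodes_with v \<and> b \<in> nodes_with v)\<^sup>*\<^sup>* x y"
  using decomposition induces_connected_rtranclp[OF _ assms]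
  unfolding tree_decomposition_def nodes_with_def by blast

lemma finite_edges_with_adhesion: "finite {(a, b). T a b \<and> X a \<inter> X b = Y}"
proof (cases "\<exists>a b. T a b \<and> X a \<inter> X b = Y")
  case True
  then obtain a0 b0 where "T a0 b0" "X a0 \<inter> X b0 = Y" by blast
  then have "{(a, b). T a b \<and> X a \<inter> X b = Y} \<subseteq> {(a0, b0), (b0, a0)}"
    using same_adhesion_same_edge by (fastforce simp: doubleton_eq_iff)
  then show ?thesis by (rule finite_subset) simp
next
  case False
  then have "{(a, b). T a b \<and> X a \<inter> X b = Y} = {}" by blast
  then show ?thesis by (metis finite.emptyI)
qed

text \<open>The bags containing v lie in the finite closed neighbourhood of v, and distinct edges
  of T have distinct adhesion sets.\<close>
lemma finite_nodes_with: "finite (nodes_with v)"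
proof -
  define N where "N = insert v {u. E v u}"
  have "finite N" using locally_finite unfolding N_def locally_finite_def by simp
  have bag_N: "X t \<subseteq> N" if "t \<in> nodes_with v" for t
    using that bag_clique unfolding nodes_with_def N_def by blast
  define Ed where "Ed = {(a, b). T a b \<and> X a \<inter> X b \<subseteq> N}"
  have "Ed = (\<Union>Y\<in>Pow N. {(a, b). T a b \<and> X a \<inter> X b = Y})"
    unfolding Ed_def by blast
  then have "finite Ed"
    using \<open>finite N\<close> finite_edges_with_adhesion by simp
  obtain t0 where t0: "t0 \<in> nodes_with v" using nodes_with_nonempty by blast
  have "nodes_with v \<subseteq> insert t0 (fst ` Ed)"
  proof
    fix x assume x: "x \<in> nodes_with v"
    from nodes_with_rtranclp[OF x t0] show "x \<in> insert t0 (fst ` Ed)"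
    proof (cases rule: converse_rtranclpE)
      case (step y)
      then have "(x, y) \<in> Ed" unfolding Ed_def using bag_N by blast
      then show ?thesis by force
    qed simp
  qed
  with \<open>finite Ed\<close> show ?thesis by (simp add: finite_subset)
qed

text \<open>The nodes whose bags contain v form a subtree, which can leave D only along an edge whose
  adhesion set contains v.\<close>
lemma nodes_with_within:
  assumes boundary: "\<And>x y. T x y \<Longrightarrow> x \<in> D \<Longrightarrow> y \<notin> D \<Longrightarrow> X x \<inter> X y \<subseteq> B"
    and "v \<notin> B" "t \<in> nodes_with v" "t \<in> D"
  shows "nodes_with v \<subseteq> D"
proof
  fix y assume "y \<in> nodes_with v"
  from nodes_with_rtranclp[OF \<open>t \<in> nodes_with v\<close> this] show "y \<in> D"
  proof (induction rule: rtranclp_induct)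
    case (step z z')
    show ?case
    proof (rule ccontr)
      assume "z' \<notin> D"
      with step boundary have "X z \<inter> X z' \<subseteq> B" by blast
      with step.hyps(2) \<open>v \<notin> B\<close> show False unfolding nodes_with_def by blast
    qed
  qed (rule \<open>t \<in> D\<close>)
qed

lemma locally_constant_off_nodes_within:
  assumes "\<And>x y. T x y \<Longrightarrow> x \<in> D \<Longrightarrow> y \<notin> D \<Longrightarrow> X x \<inter> X y \<subseteq> B"
  shows "locally_constant_off E B (\<lambda>v. nodes_with v \<subseteq> D)"
  unfolding locally_constant_off_def
proof (intro allI impI)
  fix u w assume "E u w" "u \<notin> B" "w \<notin> B"
  then obtain t where "t \<in> nodes_with u" "t \<in> nodes_with w"
    unfolding nodes_with_def by (blast elim: edge_in_bag)
  with nodes_with_within[OF assms] \<open>u \<notin> B\<close> \<open>w \<notin> B\<close>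
  show "(nodes_with u \<subseteq> D) = (nodes_with w \<subseteq> D)" by blast
qed

lemma side_boundary:
  assumes "T x y" "x \<in> side s t" "y \<notin> side s t"
  shows "X x \<inter> X y \<subseteq> X t"
proof -
  have "{x, y} = {s, t}" using assms side_closed by blast
  then show ?thesis by (auto simp: doubleton_eq_iff)
qed

lemma nodes_with_within_side:
  "v \<notin> X t \<Longrightarrow> r \<in> nodes_with v \<Longrightarrow> r \<in> side s t \<Longrightarrow> nodes_with v \<subseteq> side s t"
  using nodes_with_within[of "side s t" "X t", OF side_boundary[of _ _ s t]] by blast

lemma locally_constant_off_nodes_within_side:
  "locally_constant_off E (X t) (\<lambda>v. nodes_with v \<subseteq> side s t)"
  using locally_constant_off_nodes_within[of "side s t" "X t", OF side_boundary[of _ _ s t]]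
  by blast

definition heads_to :: "(nat \<Rightarrow> 'v) \<Rightarrow> 't \<Rightarrow> 't \<Rightarrow> bool" where
  "heads_to Q t s \<longleftrightarrow> T t s \<and> (\<forall>\<^sub>F n in sequentially. nodes_with (Q n) \<subseteq> side s t)"

lemma ray_heads_somewhere:
  assumes "is_ray E Q"
  obtains s where "heads_to Q t s"
proof -
  have "inj Q" and step: "\<And>n. E (Q n) (Q (Suc n))" using assms unfolding is_ray_def by auto
  obtain N where N: "\<And>n. N \<le> n \<Longrightarrow> Q n \<notin> X t"
    using inj_eventually_not_in[OF \<open>inj Q\<close> finite_bag] unfolding eventually_sequentially by blast
  obtain b where b: "b \<in> nodes_with (Q N)" using nodes_with_nonempty by blast
  with N have "b \<noteq> t" unfolding nodes_with_def by auto
  then obtain s where s: "T t s" "b \<in> side s t" by (rule in_some_side)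
  have "nodes_with (Q N) \<subseteq> side s t"
    using nodes_with_within_side[OF _ b s(2)] N by blast
  moreover have "(nodes_with (Q n) \<subseteq> side s t) = (nodes_with (Q N) \<subseteq> side s t)" if "N \<le> n" for n
    using locally_constant_off_walk[where Q=Q, OF locally_constant_off_nodes_within_side step N that]
    .
  ultimately have "heads_to Q t s"
    unfolding heads_to_def eventually_sequentially using s(1) by blast
  then show thesis by (rule that)
qed

lemma heads_to_unique:
  assumes "heads_to Q t s1" "heads_to Q t s2"
  shows "s1 = s2"
proof (rule ccontr)
  assume "s1 \<noteq> s2"
  have "\<forall>\<^sub>F n in sequentially. nodes_with (Q n) \<subseteq> side s1 t \<and> nodes_with (Q n) \<subseteq> side s2 t"
    using assms unfolding heads_to_def by (simp add: eventually_conj)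
  then obtain n where "nodes_with (Q n) \<subseteq> side s1 t \<inter> side s2 t"
    using eventually_happens'[OF sequentially_bot] by blast
  with sides_at_node_disjoint[of t s1 s2] assms \<open>s1 \<noteq> s2\<close> nodes_with_nonempty show False
    unfolding heads_to_def by blast
qed

lemma heads_to_if_ray_equiv:
  assumes "ray_equiv E Q1 Q2" "is_ray E Q2" "heads_to Q1 t s"
  shows "heads_to Q2 t s"
proof -
  obtain s2 where s2: "heads_to Q2 t s2" using ray_heads_somewhere[OF assms(2)] .
  have "s2 = s"
  proof (rule ccontr)
    assume "s2 \<noteq> s"
    then have "side s2 t \<inter> side s t = {}"
      using s2 assms(3) sides_at_node_disjoint unfolding heads_to_def by blast
    have "\<forall>\<^sub>F n in sequentially. nodes_with (Q2 n) \<subseteq> side s2 t"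
      using s2 unfolding heads_to_def by blast
    then have "\<forall>\<^sub>F n in sequentially. (nodes_with (Q2 n) \<subseteq> side s t) = False"
      by (rule eventually_mono) (use \<open>side s2 t \<inter> side s t = {}\<close> nodes_with_nonempty in blast)
    moreover have "\<forall>\<^sub>F n in sequentially. (nodes_with (Q1 n) \<subseteq> side s t) = True"
      using assms(3) unfolding heads_to_def by simp
    ultimately show False
      using not_ray_equiv_if_labels_differ[OF finite_bag locally_constant_off_nodes_within_side]
        assms(1) by blast
  qed
  with s2 show ?thesis by simp
qed

definition induces :: "('v \<Rightarrow> 'v) \<Rightarrow> ('t \<Rightarrow> 't) \<Rightarrow> bool" where
  "induces g \<tau> \<longleftrightarrow> \<tau> \<in> Aut T \<and> (\<forall>t. g ` X t = X (\<tau> t))"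

lemma nodes_with_image:
  assumes "g \<in> Aut E" "induces g \<tau>"
  shows "nodes_with (g v) = \<tau> ` nodes_with v"
proof -
  have "inj g" "surj \<tau>" and bags: "\<And>t. g ` X t = X (\<tau> t)"
    using assms unfolding Aut_def induces_def bij_def by blast+
  have iff: "\<tau> t \<in> nodes_with (g v) \<longleftrightarrow> t \<in> nodes_with v" for t
    unfolding nodes_with_def by (simp add: bags[symmetric] inj_image_mem_iff[OF \<open>inj g\<close>])
  show ?thesis
  proof (intro set_eqI iffI)
    fix r assume "r \<in> nodes_with (g v)"
    moreover obtain t where "r = \<tau> t" using \<open>surj \<tau>\<close> by (metis surjD)
    ultimately show "r \<in> \<tau> ` nodes_with v" using iff by blast
  qed (use iff in blast)
qed

lemma heads_to_image:
  assumes "g \<in> Aut E" "induces g \<tau>" "heads_to Q t s"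
  shows "heads_to (g \<circ> Q) (\<tau> t) (\<tau> s)"
proof -
  have "\<tau> \<in> Aut T" using assms(2) unfolding induces_def by blast
  then have "T (\<tau> t) (\<tau> s)" using assms(3) unfolding heads_to_def Aut_def by blast
  moreover have "\<forall>\<^sub>F n in sequentially. nodes_with (Q n) \<subseteq> side s t"
    using assms(3) unfolding heads_to_def by blast
  then have "\<forall>\<^sub>F n in sequentially. nodes_with (g (Q n)) \<subseteq> side (\<tau> s) (\<tau> t)"
    by (rule eventually_mono)
      (auto simp: nodes_with_image[OF assms(1,2)] intro!: side_image[OF \<open>\<tau> \<in> Aut T\<close>])
  ultimately show ?thesis unfolding heads_to_def by simp
qed

end

section \<open>Orienting the decomposition tree towards an end\<close>

locale ray_oriented_td =
  clique_td E T X for E :: "'v \<Rightarrow> 'v \<Rightarrow> bool" and T :: "'t \<Rightarrow> 't \<Rightarrow> bool" and X +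
  fixes R :: "nat \<Rightarrow> 'v"
  assumes ray: "is_ray E R"
begin

definition par :: "'t \<Rightarrow> 't" where
  "par t = (THE s. heads_to R t s)"

lemma heads_to_par: "heads_to R t (par t)"
proof -
  obtain s where "heads_to R t s" using ray_heads_somewhere[OF ray] .
  with heads_to_unique show ?thesis unfolding par_def by (metis theI)
qed

lemma par_eqI: "heads_to R t s \<Longrightarrow> par t = s"
  using heads_to_par heads_to_unique by blast

lemma T_par: "T t (par t)"
  using heads_to_par unfolding heads_to_def by blast

lemma T_par_cases:
  assumes "T t s"
  shows "s = par t \<or> t = par s"
proof (cases "s = par t")
  case False
  then have "side (par t) t \<subseteq> side t s"
    using side_subset_side T_par assms by blast
  have "\<forall>\<^sub>F n in sequentially. nodes_with (R n) \<subseteq> side (par t) t"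
    using heads_to_par unfolding heads_to_def by blast
  then have "\<forall>\<^sub>F n in sequentially. nodes_with (R n) \<subseteq> side t s"
    by (rule eventually_mono) (use \<open>side (par t) t \<subseteq> side t s\<close> in blast)
  with T_sym[OF assms] have "heads_to R s t" unfolding heads_to_def by blast
  then show ?thesis by (simp add: par_eqI)
qed simp

lemma par_par_neq: "par (par t) \<noteq> t"
proof
  assume "par (par t) = t"
  then have "\<forall>\<^sub>F n in sequentially.
      nodes_with (R n) \<subseteq> side (par t) t \<and> nodes_with (R n) \<subseteq> side t (par t)"
    using heads_to_par[of t] heads_to_par[of "par t"] unfolding heads_to_def
    by (simp add: eventually_conj)
  then obtain n where "nodes_with (R n) \<subseteq> side (par t) t \<inter> side t (par t)"
    using eventually_happens'[OF sequentially_bot] by blast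
  with sides_disjoint[OF T_par] nodes_with_nonempty show False by blast
qed

lemma side_funpow_par_mono: "side t (par t) \<subseteq> side ((par ^^ n) t) (par ((par ^^ n) t))"
proof (induction n)
  case (Suc n)
  have "side ((par ^^ n) t) (par ((par ^^ n) t)) \<subseteq> side ((par ^^ Suc n) t) (par ((par ^^ Suc n) t))"
    using side_subset_side[OF T_sym[OF T_par] T_par] par_par_neq by (simp add: eq_commute)
  with Suc.IH show ?case by blast
qed simp

lemma funpow_par_neq:
  assumes "0 < n"
  shows "(par ^^ n) t \<noteq> t"
proof
  assume "(par ^^ n) t = t"
  moreover obtain m where "n = Suc m" using assms by (cases n) auto
  ultimately have "(par ^^ m) (par t) = t" by (simp add: funpow_swap1)
  then have "side (par t) (par (par t)) \<subseteq> side t (par t)"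
    using side_funpow_par_mono[of "par t" m] by simp
  with side_self other_end_not_in_side[OF T_par] show False by blast
qed

lemma funpow_par_inj:
  assumes "(par ^^ m) x = (par ^^ n) x"
  shows "m = n"
proof -
  have False if "(par ^^ i) x = (par ^^ j) x" "i < j" for i j
  proof -
    have "(par ^^ (j - i)) ((par ^^ i) x) = (par ^^ j) x"
      using \<open>i < j\<close> by (simp flip: funpow_add[THEN fun_cong, unfolded comp_def])
    with that funpow_par_neq[of "j - i"] show False by simp
  qed
  with assms show ?thesis by (metis linorder_neqE_nat)
qed

lemma common_ancestor: "\<exists>m n. (par ^^ m) x = (par ^^ n) y"
proof -
  have "T\<^sup>*\<^sup>* x y" by (rule T_rtranclp)
  then show ?thesis
  proof (induction rule: rtranclp_induct)
    case base
    show ?case by (metis funpow_0)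
  next
    case (step y z)
    then obtain m n where mn: "(par ^^ m) x = (par ^^ n) y" by blast
    from T_par_cases[OF step.hyps(2)] show ?case
    proof
      assume "z = par y"
      show ?case
      proof (cases n)
        case 0
        with mn \<open>z = par y\<close> have "(par ^^ Suc m) x = (par ^^ 0) z" by simp
        then show ?thesis by blast
      next
        case (Suc k)
        with mn \<open>z = par y\<close> have "(par ^^ m) x = (par ^^ k) z" by (simp add: funpow_swap1)
        then show ?thesis by blast
      qed
    next
      assume "y = par z"
      with mn have "(par ^^ m) x = (par ^^ Suc n) z" by (simp add: funpow_swap1)
      then show ?case by blast
    qed
  qed
qed

definition descendants :: "'t \<Rightarrow> 't set" where
  "descendants t = {s. \<exists>n. (par ^^ n) s = t}"

lemma descendants_self: "t \<in> descendants t"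
proof -
  have "(par ^^ 0) t = t" by simp
  then show ?thesis unfolding descendants_def by blast
qed

lemma descendants_funpow_par_mono: "descendants t \<subseteq> descendants ((par ^^ m) t)"
proof
  fix s assume "s \<in> descendants t"
  then obtain n where "(par ^^ n) s = t" unfolding descendants_def by blast
  then have "(par ^^ (m + n)) s = (par ^^ m) t" by (simp add: funpow_add)
  then show "s \<in> descendants ((par ^^ m) t)" unfolding descendants_def by blast
qed

lemma descendants_par_mono: "descendants t \<subseteq> descendants (par t)"
  using descendants_funpow_par_mono[of t 1] by simp

lemma par_not_descendant: "par t \<notin> descendants t"
proof
  assume "par t \<in> descendants t"
  then obtain n where "(par ^^ n) (par t) = t" unfolding descendants_def by blast
  then have "(par ^^ Suc n) t = t" by (simp add: funpow_swap1)
  with funpow_par_neq show False by blast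
qed

lemma child_toward_descendant:
  assumes "s \<in> descendants t" "s \<noteq> t"
  obtains c where "par c = t" "s \<in> descendants c"
proof -
  obtain n where n: "(par ^^ n) s = t" using assms(1) unfolding descendants_def by blast
  with assms(2) obtain k where "n = Suc k" by (cases n) auto
  with n have k: "(par ^^ Suc k) s = t" by simp
  show thesis
  proof (rule that)
    show "par ((par ^^ k) s) = t" using k by simp
    show "s \<in> descendants ((par ^^ k) s)" unfolding descendants_def by blast
  qed
qed

lemma ancestor_of_finite:
  assumes "finite S"
  shows "\<exists>a n. \<forall>s\<in>S. \<exists>k\<le>n. (par ^^ k) s = a"
  using assms
proof (induction rule: finite_induct)
  case (insert x S)
  then obtain a n where an: "\<forall>s\<in>S. \<exists>k\<le>n. (par ^^ k) s = a" by blast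
  obtain m p where mp: "(par ^^ p) x = (par ^^ m) a" using common_ancestor by blast
  have "\<exists>k\<le>max (m + n) p. (par ^^ k) s = (par ^^ m) a" if "s \<in> insert x S" for s
  proof (cases "s = x")
    case False
    with that an obtain k where "k \<le> n" "(par ^^ k) s = a" by blast
    then have "m + k \<le> max (m + n) p" "(par ^^ (m + k)) s = (par ^^ m) a"
      by (simp_all add: funpow_add)
    then show ?thesis by blast
  next
    case True
    with mp show ?thesis by (intro exI[of _ p]) simp
  qed
  then show ?case by blast
qed simp

lemma descendants_boundary:
  assumes "T x y" "x \<in> descendants t" "y \<notin> descendants t"
  shows "x = t" "y = par t"
proof -
  obtain n where n: "(par ^^ n) x = t" using assms(2) unfolding descendants_def by blast
  have "y = par x"
  proof (rule ccontr)
    assume "y \<noteq> par x"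
    then have "x = par y" using T_par_cases[OF assms(1)] by blast
    with n have "(par ^^ Suc n) y = t" by (simp add: funpow_swap1)
    with assms(3) show False unfolding descendants_def by blast
  qed
  moreover have "n = 0"
  proof (rule ccontr)
    assume "n \<noteq> 0"
    then obtain k where "n = Suc k" by (cases n) auto
    with n \<open>y = par x\<close> have "(par ^^ k) y = t" by (simp add: funpow_swap1)
    with assms(3) show False unfolding descendants_def by blast
  qed
  ultimately show "x = t" "y = par t" using n by simp_all
qed

end

section \<open>Rays and the nodes they lie below\<close>

context ray_oriented_td
begin

definition adhesion_up :: "'t \<Rightarrow> 'v set" where
  "adhesion_up t = X t \<inter> X (par t)"

lemma finite_adhesion_up: "finite (adhesion_up t)"
  unfolding adhesion_up_def using finite_bag by blast

lemma descendants_adhesion_boundary: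
  "T x y \<Longrightarrow> x \<in> descendants t \<Longrightarrow> y \<notin> descendants t \<Longrightarrow> X x \<inter> X y \<subseteq> adhesion_up t"
  using descendants_boundary unfolding adhesion_up_def by blast

lemma nodes_with_within_descendants:
  "v \<notin> adhesion_up t \<Longrightarrow> r \<in> nodes_with v \<Longrightarrow> r \<in> descendants t \<Longrightarrow> nodes_with v \<subseteq> descendants t"
  using nodes_with_within[of "descendants t" "adhesion_up t", OF descendants_adhesion_boundary]
  by blast

lemma locally_constant_off_nodes_within_descendants:
  "locally_constant_off E (adhesion_up t) (\<lambda>v. nodes_with v \<subseteq> descendants t)"
  using locally_constant_off_nodes_within[of "descendants t" "adhesion_up t",
      OF descendants_adhesion_boundary]
  by blast

definition below :: "(nat \<Rightarrow> 'v) \<Rightarrow> 't \<Rightarrow> bool" where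
  "below Q t \<longleftrightarrow> (\<forall>\<^sub>F n in sequentially. nodes_with (Q n) \<subseteq> descendants t)"

lemma below_funpow_par: "below Q t \<Longrightarrow> below Q ((par ^^ k) t)"
  unfolding below_def using descendants_funpow_par_mono by (blast intro: eventually_mono)

lemma below_child:
  assumes "is_ray E Q" "below Q d"
  obtains c where "par c = d" "below Q c"
proof -
  have "inj Q" and step: "\<And>n. E (Q n) (Q (Suc n))" using assms(1) unfolding is_ray_def by auto
  have "\<forall>\<^sub>F n in sequentially. Q n \<notin> X d \<and> nodes_with (Q n) \<subseteq> descendants d"
    using inj_eventually_not_in[OF \<open>inj Q\<close> finite_bag] assms(2)
    unfolding below_def by (simp add: eventually_conj)
  then obtain N where N: "\<And>n. N \<le> n \<Longrightarrow> Q n \<notin> X d" "nodes_with (Q N) \<subseteq> descendants d"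
    unfolding eventually_sequentially by blast
  obtain b where b: "b \<in> nodes_with (Q N)" using nodes_with_nonempty by blast
  with N have "b \<in> descendants d" "b \<noteq> d" unfolding nodes_with_def by auto
  then obtain c where c: "par c = d" "b \<in> descendants c" by (rule child_toward_descendant)
  have off: "Q n \<notin> adhesion_up c" if "N \<le> n" for n
    using N(1)[OF that] c(1) unfolding adhesion_up_def by blast
  have "nodes_with (Q N) \<subseteq> descendants c"
    using nodes_with_within_descendants[OF off b c(2)] by simp
  moreover have "(nodes_with (Q n) \<subseteq> descendants c) = (nodes_with (Q N) \<subseteq> descendants c)"
    if "N \<le> n" for n
    using locally_constant_off_walk[where Q=Q,
        OF locally_constant_off_nodes_within_descendants step off that] .
  ultimately have "below Q c" unfolding below_def eventually_sequentially by blast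
  with c(1) show thesis by (rule that)
qed

lemma below_bag_nonempty:
  assumes "is_ray E Q" "below Q t"
  shows "X t \<noteq> {}"
proof
  assume "X t = {}"
  obtain c where c: "par c = t" "below Q c" using below_child[OF assms] .
  with \<open>X t = {}\<close> have "{c, t} = {t, par t}"
    using same_adhesion_same_edge[OF T_par T_par, of c t] by simp
  moreover have "c \<noteq> t" using T_par[of c] c(1) T_irrefl by metis
  ultimately have "par (par t) = t" using c(1) by (auto simp: doubleton_eq_iff)
  with par_par_neq show False by blast
qed

lemma below_same_level:
  assumes "below Q t" "below Q t'" "(par ^^ k) t = a" "(par ^^ k) t' = a"
  shows "t = t'"
proof -
  have "\<forall>\<^sub>F n in sequentially. nodes_with (Q n) \<subseteq> descendants t \<inter> descendants t'"
    using assms(1,2) unfolding below_def by (simp add: eventually_conj)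
  then obtain n where "nodes_with (Q n) \<subseteq> descendants t \<inter> descendants t'"
    using eventually_happens'[OF sequentially_bot] by blast
  with nodes_with_nonempty obtain s where "s \<in> descendants t" "s \<in> descendants t'" by blast
  then obtain p q where pq: "(par ^^ p) s = t" "(par ^^ q) s = t'"
    unfolding descendants_def by blast
  with assms(3,4) have "(par ^^ (k + p)) s = (par ^^ (k + q)) s" by (simp add: funpow_add)
  then have "p = q" using funpow_par_inj by fastforce
  with pq show ?thesis by simp
qed

lemma eventually_outside_if_not_below:
  assumes "is_ray E Q" "\<not> below Q t"
  shows "\<forall>\<^sub>F n in sequentially. nodes_with (Q n) \<inter> descendants t = {}"
proof -
  obtain N where N: "\<And>n. N \<le> n \<Longrightarrow> Q n \<notin> adhesion_up t"
    "\<And>n. N \<le> n \<Longrightarrow> (nodes_with (Q n) \<subseteq> descendants t) = (nodes_with (Q N) \<subseteq> descendants t)"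
    using ray_eventually_constant_off[OF assms(1) finite_adhesion_up
        locally_constant_off_nodes_within_descendants] by blast
  with assms(2) have "\<not> nodes_with (Q n) \<subseteq> descendants t" if "N \<le> n" for n
    using that unfolding below_def eventually_sequentially by blast
  with N(1) have "nodes_with (Q n) \<inter> descendants t = {}" if "N \<le> n" for n
    using nodes_with_within_descendants that by blast
  then show ?thesis unfolding eventually_sequentially by blast
qed

lemma not_ray_equiv_if_below_differs:
  assumes "is_ray E Q2" "below Q1 t" "\<not> below Q2 t"
  shows "\<not> ray_equiv E Q1 Q2" "\<not> ray_equiv E Q2 Q1"
proof -
  have "\<forall>\<^sub>F n in sequentially. (nodes_with (Q1 n) \<subseteq> descendants t) = True"
    using assms(2) unfolding below_def by simp
  moreover have "\<forall>\<^sub>F n in sequentially. (nodes_with (Q2 n) \<subseteq> descendants t) = False"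
    using eventually_outside_if_not_below[OF assms(1,3)]
    by (rule eventually_mono) (use nodes_with_nonempty in blast)
  ultimately show "\<not> ray_equiv E Q1 Q2" "\<not> ray_equiv E Q2 Q1"
    using not_ray_equiv_if_labels_differ[OF finite_adhesion_up
        locally_constant_off_nodes_within_descendants] by blast+
qed

lemma ray_meets_adhesion_up:
  assumes "is_ray E Q" "below Q d \<longleftrightarrow> \<not> nodes_with (Q 0) \<subseteq> descendants d"
  obtains j where "Q j \<in> adhesion_up d"
proof -
  have "\<exists>m. (nodes_with (Q 0) \<subseteq> descendants d) \<noteq> (nodes_with (Q m) \<subseteq> descendants d)"
  proof (cases "below Q d")
    case True
    then obtain m where "nodes_with (Q m) \<subseteq> descendants d"
      unfolding below_def using eventually_happens'[OF sequentially_bot] by blast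
    with True assms(2) show ?thesis by blast
  next
    case False
    then obtain m where "nodes_with (Q m) \<inter> descendants d = {}"
      using eventually_outside_if_not_below[OF assms(1)] eventually_happens'[OF sequentially_bot]
      by blast
    with False assms(2) nodes_with_nonempty show ?thesis by blast
  qed
  with ray_meets_if_label_changes[OF locally_constant_off_nodes_within_descendants assms(1)] that
  show thesis by blast
qed

lemma below_escapes:
  assumes "is_ray E Q" "below Q t"
  obtains d where "below Q d" "descendants d \<subseteq> descendants t" "s \<notin> descendants d"
proof (cases "s \<in> descendants t")
  case True
  then obtain k where "(par ^^ k) s = t" unfolding descendants_def by blast
  with assms(2) have "\<exists>d. below Q d \<and> descendants d \<subseteq> descendants t \<and> s \<notin> descendants d"
  proof (induction k arbitrary: t)
    case (0 t)
    obtain c where c: "par c = t" "below Q c" using below_child[OF assms(1) "0.prems"(1)] .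
    have "descendants c \<subseteq> descendants t" using c(1) descendants_par_mono by blast
    moreover have "s \<notin> descendants c" using "0.prems"(2) c(1) par_not_descendant[of c] by simp
    ultimately show ?case using c(2) by blast
  next
    case (Suc k t)
    obtain c where c: "par c = t" "below Q c" using below_child[OF assms(1) Suc.prems(1)] .
    have sub: "descendants c \<subseteq> descendants t" using c(1) descendants_par_mono by blast
    show ?case
    proof (cases "s \<in> descendants c")
      case True
      then obtain m where m: "(par ^^ m) s = c" unfolding descendants_def by blast
      with c(1) Suc.prems(2) have "(par ^^ Suc m) s = (par ^^ Suc k) s" by simp
      then have "m = k" by (rule funpow_par_inj[THEN Suc_inject])
      with Suc.IH[OF c(2)] m sub show ?thesis by blast
    next
      case False
      with c(2) sub show ?thesis by blast
    qed
  qed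
  with that show thesis by blast
next
  case False
  with assms(2) that show thesis by blast
qed

lemma below_escapes_finite:
  assumes "is_ray E Q" "below Q t" "finite S"
  obtains d where "below Q d" "S \<inter> descendants d = {}"
proof -
  from assms(3) have "\<exists>d. below Q d \<and> S \<inter> descendants d = {}"
  proof (induction rule: finite_induct)
    case empty
    with assms(2) show ?case by blast
  next
    case (insert s S)
    then obtain d where d: "below Q d" "S \<inter> descendants d = {}" by blast
    obtain d' where "below Q d'" "descendants d' \<subseteq> descendants d" "s \<notin> descendants d'"
      using below_escapes[OF assms(1) d(1)] .
    with d(2) show ?case by blast
  qed
  with that show thesis by blast
qed

lemma path_through_adhesion_up:
  assumes "Q1 j1 \<in> adhesion_up d" "Q2 j2 \<in> adhesion_up d" "adhesion_up d \<inter> F = {}"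
  shows "\<exists>p. gpath E p \<and> hd p \<in> range Q1 \<and> last p \<in> range Q2 \<and> set p \<inter> F = {}"
proof (cases "Q1 j1 = Q2 j2")
  case True
  then have "Q1 j1 \<in> range Q2" by (metis rangeI)
  with assms show ?thesis unfolding gpath_def by (intro exI[of _ "[Q1 j1]"]) auto
next
  case False
  with assms(1,2) have "E (Q1 j1) (Q2 j2)" unfolding adhesion_up_def by (blast intro: bag_clique)
  with False have "gpath E [Q1 j1, Q2 j2]" unfolding gpath_def by (simp add: less_Suc_eq)
  with assms show ?thesis by (intro exI[of _ "[Q1 j1, Q2 j2]"]) auto
qed

lemma node_separating_from_ray:
  assumes "is_ray E Q" "finite W"
  shows "\<exists>d. \<forall>v\<in>W. v \<notin> adhesion_up d \<and> (below Q d \<longleftrightarrow> \<not> nodes_with v \<subseteq> descendants d)"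
proof -
  have "finite (\<Union> (nodes_with ` W))"
    using assms(2) finite_nodes_with by simp
  show ?thesis
  proof (cases "\<exists>t. below Q t")
    case True
    then obtain d where d: "below Q d" "\<Union> (nodes_with ` W) \<inter> descendants d = {}"
      using below_escapes_finite[OF assms(1) _ \<open>finite (\<Union> (nodes_with ` W))\<close>] by blast
    have "v \<notin> X d \<and> \<not> nodes_with v \<subseteq> descendants d" if "v \<in> W" for v
    proof -
      have "nodes_with v \<inter> descendants d = {}" using d(2) that by blast
      then show ?thesis
        using descendants_self[of d] nodes_with_nonempty[of v] unfolding nodes_with_def by blast
    qed
    with d(1) show ?thesis unfolding adhesion_up_def by blast
  next
    case False
    obtain d n where "\<forall>s\<in>\<Union> (nodes_with ` W). \<exists>k\<le>n. (par ^^ k) s = d"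
      using ancestor_of_finite[OF \<open>finite (\<Union> (nodes_with ` W))\<close>] by blast
    then have d: "\<Union> (nodes_with ` W) \<subseteq> descendants d" unfolding descendants_def by blast
    have "v \<notin> X (par d) \<and> nodes_with v \<subseteq> descendants d" if "v \<in> W" for v
    proof -
      have "nodes_with v \<subseteq> descendants d" using d that by blast
      then show ?thesis using par_not_descendant[of d] unfolding nodes_with_def by blast
    qed
    with False show ?thesis unfolding adhesion_up_def by blast
  qed
qed

lemma ray_equiv_if_same_below:
  assumes "is_ray E Q1" "is_ray E Q2" "below Q1 = below Q2"
  shows "ray_equiv E Q1 Q2"
proof (rule ray_equivI)
  fix F :: "'v set" assume "finite F"
  define W where "W = insert (Q1 0) (insert (Q2 0) F)"
  have "finite W" unfolding W_def using \<open>finite F\<close> by simp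
  from node_separating_from_ray[OF assms(1) this] obtain d
    where d: "\<forall>v\<in>W. v \<notin> adhesion_up d \<and> (below Q1 d \<longleftrightarrow> \<not> nodes_with v \<subseteq> descendants d)"
    by blast
  have "below Q1 d \<longleftrightarrow> \<not> nodes_with (Q1 0) \<subseteq> descendants d"
    using d unfolding W_def by simp
  then obtain j1 where "Q1 j1 \<in> adhesion_up d" by (rule ray_meets_adhesion_up[OF assms(1)])
  moreover have "below Q1 d \<longleftrightarrow> \<not> nodes_with (Q2 0) \<subseteq> descendants d"
    using d unfolding W_def by blast
  then have "below Q2 d \<longleftrightarrow> \<not> nodes_with (Q2 0) \<subseteq> descendants d"
    using assms(3) by simp
  then obtain j2 where "Q2 j2 \<in> adhesion_up d" by (rule ray_meets_adhesion_up[OF assms(2)])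
  moreover have "adhesion_up d \<inter> F = {}" using d unfolding W_def by blast
  ultimately show "\<exists>p. gpath E p \<and> hd p \<in> range Q1 \<and> last p \<in> range Q2 \<and> set p \<inter> F = {}"
    by (rule path_through_adhesion_up)
qed

lemma ray_equiv_iff_same_below:
  assumes "is_ray E Q1" "is_ray E Q2"
  shows "ray_equiv E Q1 Q2 \<longleftrightarrow> below Q1 = below Q2"
proof
  assume equiv: "ray_equiv E Q1 Q2"
  show "below Q1 = below Q2"
  proof
    fix t
    show "below Q1 t = below Q2 t"
    proof (rule ccontr)
      assume "below Q1 t \<noteq> below Q2 t"
      then consider "below Q1 t" "\<not> below Q2 t" | "below Q2 t" "\<not> below Q1 t" by blast
      then show False
      proof cases
        case 1
        with not_ray_equiv_if_below_differs(1)[OF assms(2)] equiv show False by blast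
      next
        case 2
        with not_ray_equiv_if_below_differs(2)[OF assms(1)] equiv show False by blast
      qed
    qed
  qed
next
  assume "below Q1 = below Q2"
  with assms show "ray_equiv E Q1 Q2" by (rule ray_equiv_if_same_below)
qed

end

section \<open>Counting ends level by level\<close>

context ray_oriented_td
begin

text \<open>Nodes with empty bags are left out of the levels: no ray lies below them, and they
  contain no vertex through which to compare them with orbit representatives.\<close>
definition level :: "'t \<Rightarrow> nat \<Rightarrow> 't set" where
  "level a n = {t. (par ^^ n) t = a \<and> X t \<noteq> {}}"

lemma below_descends:
  assumes "is_ray E Q" "below Q a"
  shows "\<exists>w. w \<in> level a n \<and> below Q w"
proof -
  have "\<exists>w. (par ^^ n) w = a \<and> below Q w"
  proof (induction n)
    case (Suc n)
    then obtain w where w: "(par ^^ n) w = a" "below Q w" by blast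
    obtain c where "par c = w" "below Q c" using below_child[OF assms(1) w(2)] .
    with w(1) have "(par ^^ Suc n) c = a \<and> below Q c" by (simp add: funpow_swap1)
    then show ?case by blast
  qed (use assms(2) in simp)
  with below_bag_nonempty[OF assms(1)] show ?thesis unfolding level_def by blast
qed

lemma below_agree_above_common_node:
  assumes "below Q1 w" "below Q2 w" "(par ^^ n) w = a" "(par ^^ k) t = a" "k \<le> n"
  shows "below Q1 t \<longleftrightarrow> below Q2 t"
proof -
  define w' where "w' = (par ^^ (n - k)) w"
  have "(par ^^ k) w' = a"
    using assms(3,5) unfolding w'_def by (simp flip: funpow_add[THEN fun_cong, unfolded comp_def])
  moreover have "below Q1 w'" "below Q2 w'"
    using assms(1,2) below_funpow_par unfolding w'_def by blast+
  ultimately show ?thesis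
    using below_same_level assms(4) by metis
qed

lemma distinguishing_nodes_at_bounded_depth:
  fixes C :: "('t \<Rightarrow> 'a) set"
  assumes "finite C"
  shows "\<exists>a n. \<forall>\<beta>\<in>C. \<forall>\<gamma>\<in>C. \<beta> \<noteq> \<gamma> \<longrightarrow> (\<exists>t k. k \<le> n \<and> (par ^^ k) t = a \<and> \<beta> t \<noteq> \<gamma> t)"
proof -
  define sep where "sep \<beta> \<gamma> = (SOME t. \<beta> t \<noteq> \<gamma> t)" for \<beta> \<gamma> :: "'t \<Rightarrow> 'a"
  have sep: "\<beta> (sep \<beta> \<gamma>) \<noteq> \<gamma> (sep \<beta> \<gamma>)" if "\<beta> \<noteq> \<gamma>" for \<beta> \<gamma>
  proof -
    from that have "\<exists>t. \<beta> t \<noteq> \<gamma> t" by (auto simp: fun_eq_iff)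
    then show ?thesis unfolding sep_def by (rule someI_ex)
  qed
  have "finite (case_prod sep ` (C \<times> C))" using assms by simp
  then obtain a n where "\<forall>s\<in>case_prod sep ` (C \<times> C). \<exists>k\<le>n. (par ^^ k) s = a"
    using ancestor_of_finite by blast
  then have above: "\<exists>k\<le>n. (par ^^ k) (sep \<beta> \<gamma>) = a" if "\<beta> \<in> C" "\<gamma> \<in> C" for \<beta> \<gamma>
    using that by force
  have "\<forall>\<beta>\<in>C. \<forall>\<gamma>\<in>C. \<beta> \<noteq> \<gamma> \<longrightarrow> (\<exists>t k. k \<le> n \<and> (par ^^ k) t = a \<and> \<beta> t \<noteq> \<gamma> t)"
  proof (intro ballI impI)
    fix \<beta> \<gamma> assume "\<beta> \<in> C" "\<gamma> \<in> C" "\<beta> \<noteq> \<gamma>"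
    with above obtain k where "k \<le> n" "(par ^^ k) (sep \<beta> \<gamma>) = a" by blast
    with sep[OF \<open>\<beta> \<noteq> \<gamma>\<close>] show "\<exists>t k. k \<le> n \<and> (par ^^ k) t = a \<and> \<beta> t \<noteq> \<gamma> t" by blast
  qed
  then show ?thesis by blast
qed

lemma card_below_le:
  assumes bound: "\<And>a n. finite (level a n) \<and> card (level a n) \<le> M"
    and C: "finite C" "C \<subseteq> {below Q | Q. is_ray E Q}"
  shows "card C \<le> Suc M"
proof -
  obtain a n where an: "\<forall>\<beta>\<in>C. \<forall>\<gamma>\<in>C. \<beta> \<noteq> \<gamma> \<longrightarrow> (\<exists>t k. k \<le> n \<and> (par ^^ k) t = a \<and> \<beta> t \<noteq> \<gamma> t)"
    using distinguishing_nodes_at_bounded_depth[OF C(1)] by blast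
  define C' where "C' = {\<beta> \<in> C. \<beta> a}"
  have "\<beta> = \<gamma>" if \<beta>\<gamma>: "\<beta> \<in> C - C'" "\<gamma> \<in> C - C'" for \<beta> \<gamma>
  proof (rule ccontr)
    assume "\<beta> \<noteq> \<gamma>"
    with \<beta>\<gamma> an have "\<exists>t k. k \<le> n \<and> (par ^^ k) t = a \<and> \<beta> t \<noteq> \<gamma> t" by blast
    then obtain t k where "(par ^^ k) t = a" "\<beta> t \<or> \<gamma> t" by blast
    moreover obtain Q1 Q2 where "\<beta> = below Q1" "\<gamma> = below Q2" using \<beta>\<gamma> C(2) by blast
    ultimately have "\<beta> a \<or> \<gamma> a" using below_funpow_par by metis
    with \<beta>\<gamma> show False unfolding C'_def by blast
  qed
  then have "card (C - C') \<le> 1" using card_le_Suc0_iff_eq[of "C - C'"] C(1) by simp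
  have "\<exists>w. w \<in> level a n \<and> \<beta> w" if "\<beta> \<in> C'" for \<beta>
    using that C(2) below_descends unfolding C'_def by blast
  then obtain u where u: "\<And>\<beta>. \<beta> \<in> C' \<Longrightarrow> u \<beta> \<in> level a n \<and> \<beta> (u \<beta>)" by metis
  have "inj_on u C'"
  proof (rule inj_onI, rule ccontr)
    fix \<beta> \<gamma> assume \<beta>\<gamma>: "\<beta> \<in> C'" "\<gamma> \<in> C'" "u \<beta> = u \<gamma>" "\<beta> \<noteq> \<gamma>"
    then have "\<exists>t k. k \<le> n \<and> (par ^^ k) t = a \<and> \<beta> t \<noteq> \<gamma> t"
      using an unfolding C'_def by blast
    then obtain t k where t: "k \<le> n" "(par ^^ k) t = a" "\<beta> t \<noteq> \<gamma> t" by blast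
    obtain Q1 Q2 where "\<beta> = below Q1" "\<gamma> = below Q2"
      using \<beta>\<gamma>(1,2) C(2) unfolding C'_def by blast
    with t(1,2) u[OF \<beta>\<gamma>(1)] u[OF \<beta>\<gamma>(2)] \<beta>\<gamma>(3) have "\<beta> t = \<gamma> t"
      using below_agree_above_common_node[of Q1 "u \<beta>" Q2 n a k t] unfolding level_def by simp
    with t(3) show False ..
  qed
  moreover have "u ` C' \<subseteq> level a n" using u by blast
  ultimately have "card C' \<le> card (level a n)"
    using bound by (intro card_inj_on_le) blast+
  with bound have "card C' \<le> M" by (meson le_trans)
  moreover have "C' \<subseteq> C" unfolding C'_def by blast
  then have "card (C - C') = card C - card C'" "card C' \<le> card C"
    using C(1) by (simp_all add: card_Diff_subset finite_subset card_mono)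
  ultimately show ?thesis using \<open>card (C - C') \<le> 1\<close> by linarith
qed

lemma finite_ends_if_levels_bounded:
  assumes "\<And>a n. finite (level a n) \<and> card (level a n) \<le> M"
  shows "finite (ends E)"
proof -
  have "finite {below Q | Q. is_ray E Q}"
  proof (rule ccontr)
    assume "infinite {below Q | Q. is_ray E Q}"
    then obtain C where C: "finite C" "card C = Suc (Suc M)" "C \<subseteq> {below Q | Q. is_ray E Q}"
      using infinite_arbitrarily_large by blast
    with card_below_le[OF assms C(1,3)] show False by simp
  qed
  moreover have "ends E \<subseteq> (\<lambda>\<beta>. {Q'. is_ray E Q' \<and> \<beta> = below Q'}) ` {below Q | Q. is_ray E Q}"
  proof
    fix e assume "e \<in> ends E"
    then obtain Q where Q: "is_ray E Q" "e = {Q'. is_ray E Q' \<and> ray_equiv E Q Q'}"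
      unfolding ends_def by blast
    have "e = {Q'. is_ray E Q' \<and> below Q = below Q'}"
      unfolding Q(2) by (intro Collect_cong) (use ray_equiv_iff_same_below[OF Q(1)] in blast)
    with Q(1) show "e \<in> (\<lambda>\<beta>. {Q'. is_ray E Q' \<and> \<beta> = below Q'}) ` {below Q | Q. is_ray E Q}"
      by blast
  qed
  ultimately show ?thesis by (rule finite_surj)
qed

end

section \<open>Colour-preserving automorphisms\<close>

lemma finite_orbits_representatives:
  assumes "finite (orbits H)" "id \<in> H"
  obtains W where "finite W" "\<And>v. \<exists>g\<in>H. g v \<in> W"
proof
  show "finite ((\<lambda>Ob. SOME w. w \<in> Ob) ` orbits H)" using assms(1) by simp
next
  fix v
  have orbit: "(\<lambda>g. g v) ` H \<in> orbits H" unfolding orbits_def by blast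
  have "v \<in> (\<lambda>g. g v) ` H" using image_eqI[of v "\<lambda>g. g v" id] assms(2) by simp
  then have "(SOME w. w \<in> (\<lambda>g. g v) ` H) \<in> (\<lambda>g. g v) ` H" by (rule someI)
  then obtain g where "g \<in> H" "g v = (SOME w. w \<in> (\<lambda>g. g v) ` H)" by (metis imageE)
  with orbit show "\<exists>g\<in>H. g v \<in> (\<lambda>Ob. SOME w. w \<in> Ob) ` orbits H" by (metis imageI)
qed

context clique_td
begin

lemma induces_rigid:
  assumes "proper_coloring E c"
    and g1: "g1 \<in> Aut E" "induces g1 \<tau>1" "\<forall>v. c (g1 v) = c v"
    and g2: "g2 \<in> Aut E" "induces g2 \<tau>2" "\<forall>v. c (g2 v) = c v"
    and "\<tau>1 a = \<tau>2 a"
  shows "\<tau>1 = \<tau>2"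
proof -
  have bags: "g1 ` X t = X (\<tau>1 t)" "g2 ` X t = X (\<tau>2 t)" for t
    using g1 g2 unfolding induces_def by blast+
  have T\<tau>: "T t s \<Longrightarrow> T (\<tau>1 t) (\<tau>1 s)" "T t s \<Longrightarrow> T (\<tau>2 t) (\<tau>2 s)" for t s
    using g1 g2 unfolding induces_def Aut_def by blast+
  have agree_on_bag: "g1 x = g2 x" if "\<tau>1 t = \<tau>2 t" "x \<in> X t" for t x
  proof (rule ccontr)
    assume "g1 x \<noteq> g2 x"
    moreover have "g1 x \<in> X (\<tau>1 t)" "g2 x \<in> X (\<tau>1 t)" using bags that by (metis imageI)+
    ultimately have "E (g1 x) (g2 x)" by (rule bag_clique[rotated 2])
    with assms(1) g1(3) g2(3) show False unfolding proper_coloring_def by metis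
  qed
  have agree_on_neighbour: "\<tau>1 s = \<tau>2 s" if "\<tau>1 t = \<tau>2 t" "T t s" for t s
  proof -
    have "inj g1" "inj g2" using g1(1) g2(1) unfolding Aut_def bij_def by blast+
    have "X (\<tau>1 t) \<inter> X (\<tau>1 s) = g1 ` (X t \<inter> X s)"
      using bags \<open>inj g1\<close> by (simp add: image_Int)
    also have "\<dots> = g2 ` (X t \<inter> X s)"
      using agree_on_bag[OF that(1)] by (intro image_cong) auto
    also have "\<dots> = X (\<tau>2 t) \<inter> X (\<tau>2 s)"
      using bags \<open>inj g2\<close> by (simp add: image_Int)
    finally have "{\<tau>1 t, \<tau>1 s} = {\<tau>2 t, \<tau>2 s}"
      using same_adhesion_same_edge T\<tau> that(2) by blast
    moreover have "\<tau>1 s \<noteq> \<tau>1 t" using T\<tau>(1)[OF that(2)] T_irrefl by metis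
    ultimately show ?thesis using that(1) by (auto simp: doubleton_eq_iff)
  qed
  show ?thesis
  proof
    fix x
    have "T\<^sup>*\<^sup>* a x" by (rule T_rtranclp)
    then show "\<tau>1 x = \<tau>2 x"
    proof induction
      case (step y z)
      then show ?case using agree_on_neighbour by blast
    qed (rule \<open>\<tau>1 a = \<tau>2 a\<close>)
  qed
qed

end

context ray_oriented_td
begin

lemma par_image:
  assumes "g \<in> Aut E" "induces g \<tau>" "ray_equiv E R (g \<circ> R)"
  shows "\<tau> (par t) = par (\<tau> t)"
proof -
  have "heads_to (g \<circ> R) (\<tau> t) (\<tau> (par t))"
    using heads_to_image[OF assms(1,2) heads_to_par] .
  moreover have "heads_to (g \<circ> R) (\<tau> t) (par (\<tau> t))"
    using heads_to_if_ray_equiv[OF assms(3) is_ray_comp_Aut[OF assms(1) ray] heads_to_par] .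
  ultimately show ?thesis by (rule heads_to_unique)
qed

lemma funpow_par_image:
  assumes "g \<in> Aut E" "induces g \<tau>" "ray_equiv E R (g \<circ> R)"
  shows "\<tau> ((par ^^ n) t) = (par ^^ n) (\<tau> t)"
  by (induction n) (simp_all add: par_image[OF assms])

lemma levels_bounded_if_periodic:
  assumes "proper_coloring E c" "periodic_coloring E c"
    and induces: "\<And>g. g \<in> Aut E \<Longrightarrow> induces g (\<sigma> g)"
    and fixes_end: "\<And>g. g \<in> Aut E \<Longrightarrow> ray_equiv E R (g \<circ> R)"
  obtains M where "\<And>a n. finite (level a n) \<and> card (level a n) \<le> M"
proof -
  define H where "H = {g \<in> Aut E. \<forall>v. c (g v) = c v}"
  have "id \<in> H" unfolding H_def Aut_def by simp
  moreover have "finite (orbits H)" using assms(2) unfolding periodic_coloring_def H_def .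
  ultimately obtain W where "finite W" and W: "\<And>v. \<exists>g\<in>H. g v \<in> W"
    using finite_orbits_representatives by metis
  define Z where "Z = \<Union> (nodes_with ` W)"
  have "finite Z" unfolding Z_def using \<open>finite W\<close> by (simp add: finite_nodes_with)
  have "\<exists>g\<in>H. \<sigma> g t \<in> Z" if nonempty: "X t \<noteq> {}" for t
  proof -
    obtain v where "v \<in> X t" using nonempty by blast
    obtain g where "g \<in> H" "g v \<in> W" using W by blast
    then have "g \<in> Aut E" unfolding H_def by blast
    have "\<sigma> g t \<in> \<sigma> g ` nodes_with v" using \<open>v \<in> X t\<close> unfolding nodes_with_def by blast
    then have "\<sigma> g t \<in> nodes_with (g v)"
      using nodes_with_image[OF \<open>g \<in> Aut E\<close> induces[OF \<open>g \<in> Aut E\<close>]] by simp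
    with \<open>g \<in> H\<close> \<open>g v \<in> W\<close> show ?thesis unfolding Z_def by blast
  qed
  then have "\<forall>t. \<exists>g. X t \<noteq> {} \<longrightarrow> g \<in> H \<and> \<sigma> g t \<in> Z" by blast
  from choice[OF this] obtain h where h: "\<forall>t. X t \<noteq> {} \<longrightarrow> h t \<in> H \<and> \<sigma> (h t) t \<in> Z"
    by blast
  have inj: "inj_on (\<lambda>t. \<sigma> (h t) t) (level a n)" for a n
  proof (rule inj_onI)
    fix t1 t2 assume t: "t1 \<in> level a n" "t2 \<in> level a n" "\<sigma> (h t1) t1 = \<sigma> (h t2) t2"
    then have level: "(par ^^ n) t1 = a" "(par ^^ n) t2 = a" "X t1 \<noteq> {}" "X t2 \<noteq> {}"
      unfolding level_def by blast+
    then have "h t1 \<in> H" "h t2 \<in> H" using h by blast+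
    then have Aut: "h t1 \<in> Aut E" "h t2 \<in> Aut E"
      and colour: "\<forall>v. c (h t1 v) = c v" "\<forall>v. c (h t2 v) = c v"
      unfolding H_def by blast+
    have "\<sigma> (h t1) a = (par ^^ n) (\<sigma> (h t1) t1)"
      using funpow_par_image[OF Aut(1) induces[OF Aut(1)] fixes_end[OF Aut(1)]] level(1) by blast
    also have "\<dots> = \<sigma> (h t2) a"
      using funpow_par_image[OF Aut(2) induces[OF Aut(2)] fixes_end[OF Aut(2)], of n t2] level(2) t(3)
      by simp
    finally have "\<sigma> (h t1) = \<sigma> (h t2)"
      by (rule induces_rigid[OF assms(1) Aut(1) induces[OF Aut(1)] colour(1)
            Aut(2) induces[OF Aut(2)] colour(2)])
    moreover have "inj (\<sigma> (h t1))"
      using induces[OF Aut(1)] unfolding induces_def Aut_def bij_def by blast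
    ultimately show "t1 = t2" using t(3) by (simp add: inj_eq)
  qed
  have "\<sigma> (h t) t \<in> Z" if "t \<in> level a n" for t a n
    using h that unfolding level_def by simp
  then have sub: "(\<lambda>t. \<sigma> (h t) t) ` level a n \<subseteq> Z" for a n by blast
  have "finite (level a n) \<and> card (level a n) \<le> card Z" for a n
    using inj_on_finite[OF inj sub \<open>finite Z\<close>] card_inj_on_le[OF inj sub \<open>finite Z\<close>] by simp
  then show thesis by (rule that)
qed

end

theorem lemma4p4:
  fixes E :: "'v \<Rightarrow> 'v \<Rightarrow> bool"
    and T :: "'t \<Rightarrow> 't \<Rightarrow> bool"
    and X :: "'t \<Rightarrow> 'v set"
  assumes "graph E"
    and "connected_graph E"
    and "locally_finite E"
    and "quasi_transitive E"
    and "infinite (ends E)"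
    and "tree_decomposition E T X"
    and "canonical_td E T X"
    and "\<forall>t. finite (X t) \<and> is_clique E (X t)"
    and "unique_adhesion T X"
    and "\<exists>\<omega>\<in>ends E. \<forall>g\<in>Aut E. stabilizes_end g \<omega>"
  shows "\<not> (\<exists>c :: 'v \<Rightarrow> 'c. proper_coloring E c \<and> periodic_coloring E c)"
proof
  assume "\<exists>c :: 'v \<Rightarrow> 'c. proper_coloring E c \<and> periodic_coloring E c"
  then obtain c :: "'v \<Rightarrow> 'c"
    where proper: "proper_coloring E c" and periodic: "periodic_coloring E c"
    by blast
  obtain \<omega> where \<omega>: "\<omega> \<in> ends E" "\<forall>g\<in>Aut E. stabilizes_end g \<omega>" using assms(10) by blast
  then obtain R where R: "is_ray E R" "\<omega> = {R'. is_ray E R' \<and> ray_equiv E R R'}"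
    unfolding ends_def by blast
  interpret ray_oriented_td E T X R
    by unfold_locales (fact assms(3,6,8,9) R(1))+
  have fixes_end: "ray_equiv E R (g \<circ> R)" if "g \<in> Aut E" for g
  proof -
    have "R \<in> \<omega>" using R ray_equiv_refl by blast
    with \<omega>(2) that have "g \<circ> R \<in> \<omega>" unfolding stabilizes_end_def by blast
    with R(2) show ?thesis by blast
  qed
  obtain \<sigma> :: "('v \<Rightarrow> 'v) \<Rightarrow> 't \<Rightarrow> 't"
    where "\<forall>g\<in>Aut E. \<sigma> g \<in> Aut T \<and> (\<forall>t. g ` X t = X (\<sigma> g t))"
    using assms(7) unfolding canonical_td_def by blast
  then have \<sigma>: "\<And>g. g \<in> Aut E \<Longrightarrow> induces g (\<sigma> g)" unfolding induces_def by blast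
  obtain M where "\<And>a n. finite (level a n) \<and> card (level a n) \<le> M"
    using levels_bounded_if_periodic[OF proper periodic \<sigma> fixes_end] by blast
  then have "finite (ends E)" by (rule finite_ends_if_levels_bounded)
  with assms(5) show False by contradiction
qed

end
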